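(* Let $K\ge1$, $p_D\in(0,1]$, and for each $y\in[K]$ let $p_y^+>0$, $p_y^->0$ with $\sum_y(p_y^++p_y^-)=1$, $p_y:=p_y^++p_y^-$, $p^\pm:=\sum_yp_y^\pm$, and let $C^\pm_{y,y}\in[0,1)$ be fixed. For unknowns $(q_y,q_y^+)_y$ define \[ \Delta\mathrm{eq.opp.}(y)=\frac{p_D}{p_y^+p_y^-}(C^+_{y,y}-1)(q_yp_y^+-p_yq_y^+)+(C^+_{y,y}-C^-_{y,y})\Bigl(1-p_D\frac{q_y-q_y^+}{p_y^-}\Bigr). \] If either $p_D<p^-\min_y\frac{C^+_{y,y}-C^-_{y,y}}{1-C^-_{y,y}}$ or $p_D<p^+\min_y\frac{C^-_{y,y}-C^+_{y,y}}{1-C^+_{y,y}}$, then there exist no $(q_y,q_y^+)_y$ with $\sum_yq_y=1$, $0\le q_y^+\le q_y$ for all $y$, and $\Delta\mathrm{eq.opp.}(y)=0$ for all $y$.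
   Context: Interpretation: $p_D=\mathbb{P}(D=1)$ (memorized mass), $p_y^\pm=\mathbb{P}(Y=y,A=1\text{ resp. }0)$, $q_y=\mathbb{P}(Y=y\mid D=1)$, $q_y^+=\mathbb{P}(Y=y,A=1\mid D=1)$, $C^\pm_{y,y}$ the base classifier's true-positive rates for label $y$ on the unmemorized part in group $A=1$ resp. $A=0$; the formula is the equal opportunity gap of the memorizing classifier, with $C^\pm$ treated as fixed parameters. *)

theory Defs
  imports Complex_Main
begin

text \<open>Equal opportunity gap of the memorizing classifier for label y.
  pD: memorized mass; pp y = p_y^+, pm y = p_y^-; Cp y = C^+_{y,y}, Cm y = C^-_{y,y};
  q y = q_y, qp y = q_y^+.\<close>
definition eq_opp_gap ::
  "real \<Rightarrow> (nat \<Rightarrow> real) \<Rightarrow> (nat \<Rightarrow> real) \<Rightarrow> (nat \<Rightarrow> real) \<Rightarrow> (nat \<Rightarrow> real)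
   \<Rightarrow> (nat \<Rightarrow> real) \<Rightarrow> (nat \<Rightarrow> real) \<Rightarrow> nat \<Rightarrow> real" where
  "eq_opp_gap pD pp pm Cp Cm q qp y =
     pD / (pp y * pm y) * (Cp y - 1) * (q y * pp y - (pp y + pm y) * qp y)
     + (Cp y - Cm y) * (1 - pD * (q y - qp y) / pm y)"

end

theory Submission
  imports Defs
begin

(* A zero gap for label y says
     pD (1 - C-) (q - q+) / p- = pD (1 - C+) q+ / p+ + (C+ - C-),
   where both fractions are nonnegative. Hence pD (q_y - q+_y) >= p-_y (C+ - C-) / (1 - C-),
   and summing over y with sum (q_y - q+_y) <= 1 gives pD >= p- min_y (C+ - C-) / (1 - C-).
   The second condition is the mirror image: exchanging the two groups (and q+ with q - q+)
   only changes the sign of the gap. *)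

lemma eq_opp_gap_eq:
  assumes "pp y > 0" "pm y > 0"
  shows "eq_opp_gap pD pp pm Cp Cm q qp y =
    pD * (1 - Cp y) * qp y / pp y + (Cp y - Cm y) - pD * (1 - Cm y) * (q y - qp y) / pm y"
  using assms unfolding eq_opp_gap_def by (simp add: field_simps)

lemma eq_opp_gap_swap_groups:
  assumes "pp y > 0" "pm y > 0"
  shows "eq_opp_gap pD pm pp Cm Cp q (\<lambda>y. q y - qp y) y = - eq_opp_gap pD pp pm Cp Cm q qp y"
  using assms by (simp add: eq_opp_gap_eq algebra_simps)

lemma eq_opp_gap_zero_imp_bound:
  assumes gap: "eq_opp_gap pD pp pm Cp Cm q qp y = 0"
    and pos: "pp y > 0" "pm y > 0"
    and "0 \<le> pD" "Cp y \<le> 1" "Cm y < 1" "0 \<le> qp y"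
  shows "(Cp y - Cm y) / (1 - Cm y) * pm y \<le> pD * (q y - qp y)"
proof -
  have "0 \<le> pD * (1 - Cp y) * qp y / pp y"
    using assms by simp
  then have "Cp y - Cm y \<le> pD * (1 - Cm y) * (q y - qp y) / pm y"
    using gap pos by (simp add: eq_opp_gap_eq)
  then have "(Cp y - Cm y) * pm y \<le> pD * (q y - qp y) * (1 - Cm y)"
    using pos by (simp add: pos_le_divide_eq mult.commute mult.left_commute)
  then show ?thesis
    using \<open>Cm y < 1\<close> by (simp add: pos_divide_le_eq)
qed

lemma eq_opp_gap_zero_imp_memorized_mass_ge:
  assumes pos: "\<forall>y<K. pp y > 0 \<and> pm y > 0"
    and "0 \<le> pD" "pD \<le> 1"
    and Cp: "\<forall>y<K. Cp y \<le> 1" and Cm: "\<forall>y<K. Cm y < 1"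
    and q: "(\<Sum>y<K. q y) = 1" "\<forall>y<K. 0 \<le> qp y \<and> qp y \<le> q y"
    and gap: "\<forall>y<K. eq_opp_gap pD pp pm Cp Cm q qp y = 0"
  shows "(\<Sum>y<K. pm y) * Min ((\<lambda>y. (Cp y - Cm y) / (1 - Cm y)) ` {..<K}) \<le> pD"
proof -
  define m where "m = Min ((\<lambda>y. (Cp y - Cm y) / (1 - Cm y)) ` {..<K})"
  have "m * pm y \<le> pD * (q y - qp y)" if "y < K" for y
  proof -
    have "m \<le> (Cp y - Cm y) / (1 - Cm y)"
      unfolding m_def using that by (intro Min_le) auto
    then have "m * pm y \<le> (Cp y - Cm y) / (1 - Cm y) * pm y"
      using pos that by (intro mult_right_mono) auto
    also have "\<dots> \<le> pD * (q y - qp y)"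
      using assms that by (intro eq_opp_gap_zero_imp_bound) auto
    finally show ?thesis .
  qed
  then have "m * (\<Sum>y<K. pm y) \<le> pD * (\<Sum>y<K. q y - qp y)"
    unfolding sum_distrib_left by (rule sum_mono) simp
  also have "\<dots> \<le> pD"
    using q \<open>0 \<le> pD\<close> sum_nonneg[of "{..<K}" qp]
    by (intro mult_left_le) (simp_all add: sum_subtractf)
  finally show ?thesis
    by (simp add: m_def mult.commute)
qed

theorem corollary14:
  fixes K :: nat and pD :: real
    and pp pm Cp Cm :: "nat \<Rightarrow> real"
  assumes K: "K \<ge> 1"
    and pD: "0 < pD" "pD \<le> 1"
    and pos: "\<forall>y<K. pp y > 0 \<and> pm y > 0"
    and total: "(\<Sum>y<K. pp y + pm y) = 1"
    and Cp: "\<forall>y<K. 0 \<le> Cp y \<and> Cp y < 1"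
    and Cm: "\<forall>y<K. 0 \<le> Cm y \<and> Cm y < 1"
    and cond: "pD < (\<Sum>y<K. pm y) * Min ((\<lambda>y. (Cp y - Cm y) / (1 - Cm y)) ` {..<K})
             \<or> pD < (\<Sum>y<K. pp y) * Min ((\<lambda>y. (Cm y - Cp y) / (1 - Cp y)) ` {..<K})"
  shows "\<not> (\<exists>q qp :: nat \<Rightarrow> real.
             (\<Sum>y<K. q y) = 1
           \<and> (\<forall>y<K. 0 \<le> qp y \<and> qp y \<le> q y)
           \<and> (\<forall>y<K. eq_opp_gap pD pp pm Cp Cm q qp y = 0))"
proof
  assume "\<exists>q qp :: nat \<Rightarrow> real. (\<Sum>y<K. q y) = 1
           \<and> (\<forall>y<K. 0 \<le> qp y \<and> qp y \<le> q y)
           \<and> (\<forall>y<K. eq_opp_gap pD pp pm Cp Cm q qp y = 0)"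
  then obtain q qp :: "nat \<Rightarrow> real" where q: "(\<Sum>y<K. q y) = 1"
    and qp: "\<forall>y<K. 0 \<le> qp y \<and> qp y \<le> q y"
    and gap: "\<forall>y<K. eq_opp_gap pD pp pm Cp Cm q qp y = 0"
    by blast
  have "(\<Sum>y<K. pm y) * Min ((\<lambda>y. (Cp y - Cm y) / (1 - Cm y)) ` {..<K}) \<le> pD"
    using pD pos Cp Cm q qp gap by (intro eq_opp_gap_zero_imp_memorized_mass_ge) auto
  moreover have "(\<Sum>y<K. pp y) * Min ((\<lambda>y. (Cm y - Cp y) / (1 - Cp y)) ` {..<K}) \<le> pD"
  proof (rule eq_opp_gap_zero_imp_memorized_mass_ge[where qp = "\<lambda>y. q y - qp y"])
    show "\<forall>y<K. eq_opp_gap pD pm pp Cm Cp q (\<lambda>y. q y - qp y) y = 0"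
      using pos gap by (simp add: eq_opp_gap_swap_groups)
  qed (use pD pos Cp Cm q qp in auto)
  ultimately show False
    using cond by linarith
qed

end
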